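(* Let $s\ge1$ and $B\in\mathbb{F}_2^{s\times s}$, and define \[ H_X(B)=[\,B\otimes I_s \mid I_s\otimes B^{\mathsf T}\,],\qquad H_Z(B)=[\,I_s\otimes B \mid B^{\mathsf T}\otimes I_s\,]. \] If the Tanner graph of $B$ has no 4-cycles and no simple 6-cycles, then the Tanner graphs of $H_X(B)$ and of $H_Z(B)$ also have no 4-cycles and no simple 6-cycles.
   Context: $\otimes$ denotes the Kronecker product and $I_s$ the $s\times s$ identity over $\mathbb{F}_2$. The Tanner graph of a binary matrix $H$ is the bipartite graph whose vertices are the rows (check nodes) and columns (variable nodes) of $H$, with row $r$ adjacent to column $c$ iff $H_{rc}=1$. A simple $2\ell$-cycle is a cycle in this graph of length $2\ell$ with all vertices distinct. *)

theory Defs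
  imports Main
begin

text \<open>Binary matrices over F_2 are represented as functions nat => nat => bool
  (True = 1, False = 0), with the dimensions carried separately; only entries
  with row index < m and column index < n are meaningful.\<close>

type_synonym bmat = "nat \<Rightarrow> nat \<Rightarrow> bool"

definition bid :: bmat where
  "bid = (\<lambda>i j. i = j)"

definition btrans :: "bmat \<Rightarrow> bmat" where
  "btrans A = (\<lambda>i j. A j i)"

text \<open>Kronecker product A \<otimes> C, where C has size s x s (block size s).
  Over F_2 the product of entries is conjunction.\<close>
definition bkron :: "nat \<Rightarrow> bmat \<Rightarrow> bmat \<Rightarrow> bmat" where
  "bkron s A C = (\<lambda>i j. A (i div s) (j div s) \<and> C (i mod s) (j mod s))"

definition bhcat :: "nat \<Rightarrow> bmat \<Rightarrow> bmat \<Rightarrow> bmat" where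
  "bhcat n A C = (\<lambda>i j. if j < n then A i j else C i (j - n))"

definition HX :: "nat \<Rightarrow> bmat \<Rightarrow> bmat" where
  "HX s B = bhcat (s * s) (bkron s B bid) (bkron s bid (btrans B))"

definition HZ :: "nat \<Rightarrow> bmat \<Rightarrow> bmat" where
  "HZ s B = bhcat (s * s) (bkron s bid B) (bkron s (btrans B) bid)"

text \<open>The Tanner graph of the m x n matrix H has a simple 2l-cycle:
  distinct check nodes r 0..r (l-1) and distinct variable nodes c 0..c (l-1)
  with edges r i -- c i and r i -- c ((i+1) mod l), i.e. the closed walk
  r 0, c 1, r 1, c 2, ..., r (l-1), c 0, r 0 with all vertices distinct.\<close>
definition tanner_cycle :: "bmat \<Rightarrow> nat \<Rightarrow> nat \<Rightarrow> nat \<Rightarrow> bool" where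
  "tanner_cycle H m n l \<longleftrightarrow>
     (\<exists>r c :: nat \<Rightarrow> nat.
        (\<forall>i<l. r i < m \<and> c i < n) \<and>
        inj_on r {..<l} \<and> inj_on c {..<l} \<and>
        (\<forall>i<l. H (r i) (c i) \<and> H (r i) (c ((i + 1) mod l))))"

end

theory Submission
  imports Defs "HOL-Number_Theory.Cong"
begin

text \<open>
  Both H_X(B) and H_Z(B) are, after relabelling rows and columns, of the form [A \<otimes> I | I \<otimes> C]
  with A = B and C = B^T: checks are pairs (a, b), and a column of the first (second) block
  only joins checks that differ in a (in b). Going once around a cycle, whose checks are
  distinct, a block used by exactly one column would change one coordinate at a single step
  while every other step keeps it fixed, which is impossible. So each block is used by no
  column or by at least two, and a cycle of length less than 8 stays inside one block. There it
  projects to a cycle of the same length in the Tanner graph of A or of C; finally, B^T has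
  the same short cycles as B.
\<close>

definition is_tanner_cycle :: "bmat \<Rightarrow> nat \<Rightarrow> nat \<Rightarrow> nat \<Rightarrow> (nat \<Rightarrow> nat) \<Rightarrow> (nat \<Rightarrow> nat) \<Rightarrow> bool" where
  "is_tanner_cycle H m n l r c \<longleftrightarrow>
     (\<forall>i<l. r i < m \<and> c i < n) \<and> inj_on r {..<l} \<and> inj_on c {..<l} \<and>
     (\<forall>i<l. H (r i) (c i) \<and> H (r i) (c (Suc i mod l)))"

lemma tanner_cycle_iff: "tanner_cycle H m n l \<longleftrightarrow> (\<exists>r c. is_tanner_cycle H m n l r c)"
  by (simp add: tanner_cycle_def is_tanner_cycle_def)

lemma is_tanner_cycleD:
  assumes "is_tanner_cycle H m n l r c" "i < l"
  shows "r i < m" "c i < n" "H (r i) (c i)" "H (r i) (c (Suc i mod l))"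
  using assms by (auto simp: is_tanner_cycle_def)

lemma inj_on_rotate: "inj_on (\<lambda>i. (i + t) mod l) {..<l :: nat}"
proof (rule inj_onI)
  fix i j assume "i \<in> {..<l}" "j \<in> {..<l}" and shifted: "(i + t) mod l = (j + t) mod l"
  have "[i = j] (mod l)"
    using shifted cong_add_rcancel_nat[of i t j l] by (simp add: cong_def)
  with \<open>i \<in> {..<l}\<close> \<open>j \<in> {..<l}\<close> show "i = j"
    by (simp add: cong_less_modulus_unique_nat)
qed

lemma inj_on_comp_rotate:
  fixes f :: "nat \<Rightarrow> 'a"
  assumes "inj_on f {..<l}"
  shows "inj_on (\<lambda>i. f ((i + t) mod l)) {..<l}"
proof -
  have "(\<lambda>i. (i + t) mod l) ` {..<l} \<subseteq> {..<l}" by auto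
  then show ?thesis
    using comp_inj_on[OF inj_on_rotate inj_on_subset[OF assms]] by (simp add: comp_def)
qed

lemma is_tanner_cycle_rotate:
  assumes "is_tanner_cycle H m n l r c"
  shows "is_tanner_cycle H m n l (\<lambda>i. r ((i + t) mod l)) (\<lambda>i. c ((i + t) mod l))"
proof -
  have "(Suc i mod l + t) mod l = Suc ((i + t) mod l) mod l" for i
    by (simp add: mod_Suc_eq mod_add_left_eq)
  moreover have "(i + t) mod l < l" if "i < l" for i
    using that by simp
  ultimately show ?thesis
    using assms inj_on_comp_rotate[of r l t] inj_on_comp_rotate[of c l t]
    by (simp add: is_tanner_cycle_def)
qed

lemma is_tanner_cycle_btrans:
  assumes "is_tanner_cycle (btrans H) n m l r c"
  shows "is_tanner_cycle H m n l (\<lambda>i. c (Suc i mod l)) r"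
proof -
  have "Suc i mod l < l" if "i < l" for i using that by simp
  moreover have "inj_on (\<lambda>i. c ((i + 1) mod l)) {..<l}"
    using assms inj_on_comp_rotate unfolding is_tanner_cycle_def by blast
  ultimately show ?thesis
    using assms by (auto simp: is_tanner_cycle_def btrans_def)
qed

lemma tanner_cycle_btrans: "tanner_cycle (btrans H) n m l \<Longrightarrow> tanner_cycle H m n l"
  using is_tanner_cycle_btrans tanner_cycle_iff by metis

lemma eq_along_chain:
  assumes "\<And>i. Suc i < l \<Longrightarrow> f i = f (Suc i)" "i < l"
  shows "f i = f 0"
  using assms(2) by (induction i) (auto simp: assms(1))

text \<open>
  The matrix [A \<otimes> I | I \<otimes> C] in coordinates: row r is the pair (p r, q r), column c is the
  pair (P c, Q c) in the block selected by left c.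
\<close>
locale hypergraph_product =
  fixes H :: bmat and m n :: nat and A C :: bmat and k :: nat
    and p q :: "nat \<Rightarrow> nat" and left :: "nat \<Rightarrow> bool" and P Q :: "nat \<Rightarrow> nat"
  assumes inj_row_coords: "inj_on (\<lambda>r. (p r, q r)) {..<m}"
    and inj_col_coords: "inj_on (\<lambda>c. (left c, P c, Q c)) {..<n}"
    and row_coords_less: "r < m \<Longrightarrow> p r < k \<and> q r < k"
    and col_coords_less: "c < n \<Longrightarrow> P c < k \<and> Q c < k"
    and entry: "r < m \<Longrightarrow> c < n \<Longrightarrow>
      H r c = (if left c then A (p r) (P c) \<and> q r = Q c else p r = P c \<and> C (q r) (Q c))"
begin

lemma swap_blocks: "hypergraph_product H m n C A k q p (\<lambda>c. \<not> left c) Q P"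
proof
  show "inj_on (\<lambda>r. (q r, p r)) {..<m}"
    using inj_row_coords by (auto simp: inj_on_def)
  show "inj_on (\<lambda>c. (\<not> left c, Q c, P c)) {..<n}"
    using inj_col_coords by (auto simp: inj_on_def)
qed (auto simp: row_coords_less col_coords_less entry)

lemma cycle_column_kind_repeats_at_0:
  assumes cyc: "is_tanner_cycle H m n l r c" and "2 \<le> l"
  shows "\<exists>i. 0 < i \<and> i < l \<and> left (c i) = left (c 0)"
proof (rule ccontr)
  assume "\<not> ?thesis"
  then have other_kind: "left (c (Suc i)) \<longleftrightarrow> \<not> left (c 0)" if "Suc i < l" for i
    using that by blast
  define fixed_by_rest where "fixed_by_rest = (if left (c 0) then p else q)"
  define fixed_by_c0 where "fixed_by_c0 = (if left (c 0) then q else p)"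
  note less = is_tanner_cycleD(1,2)[OF cyc]
  have last: "l - 1 < l" "Suc (l - 1) mod l = 0" and first: "0 < l"
    using \<open>2 \<le> l\<close> by auto
  have adjacent: "H (r i) (c (Suc i)) \<and> H (r (Suc i)) (c (Suc i))" if "Suc i < l" for i
    using is_tanner_cycleD(3,4)[OF cyc, of i] is_tanner_cycleD(3)[OF cyc, of "Suc i"] that by simp
  have "fixed_by_rest (r i) = fixed_by_rest (r (Suc i))" if "Suc i < l" for i
    using adjacent[OF that] other_kind[OF that] less[of i] less[of "Suc i"] that
    by (auto simp: entry fixed_by_rest_def split: if_splits)
  then have rest_eq: "fixed_by_rest (r (l - 1)) = fixed_by_rest (r 0)"
    using last(1) by (rule eq_along_chain)
  have "fixed_by_c0 (r (l - 1)) = fixed_by_c0 (r 0)"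
    using is_tanner_cycleD(4)[OF cyc last(1)] is_tanner_cycleD(3)[OF cyc first]
      less[OF first] less[OF last(1)] unfolding last(2)
    by (auto simp: entry fixed_by_c0_def split: if_splits)
  with rest_eq have "(p (r (l - 1)), q (r (l - 1))) = (p (r 0), q (r 0))"
    by (cases "left (c 0)") (simp_all add: fixed_by_rest_def fixed_by_c0_def)
  then have "r (l - 1) = r 0"
    by (rule inj_onD[OF inj_row_coords]) (use less(1)[OF first] less(1)[OF last(1)] in auto)
  then have "l - 1 = 0"
    using cyc last(1) first by (auto simp: is_tanner_cycle_def dest: inj_onD)
  with \<open>2 \<le> l\<close> show False by simp
qed

lemma cycle_column_kind_repeats:
  assumes cyc: "is_tanner_cycle H m n l r c" and "2 \<le> l" "j < l"
  shows "\<exists>i<l. i \<noteq> j \<and> left (c i) = left (c j)"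
proof -
  obtain i where i: "0 < i" "i < l" "left (c ((i + j) mod l)) = left (c ((0 + j) mod l))"
    using cycle_column_kind_repeats_at_0[OF is_tanner_cycle_rotate[OF cyc, of j]] \<open>2 \<le> l\<close>
    by blast
  have "(i + j) mod l \<noteq> (0 + j) mod l"
    using inj_onD[OF inj_on_rotate, of i j l 0] i by auto
  with i \<open>j < l\<close> show ?thesis
    by (intro exI[of _ "(i + j) mod l"]) auto
qed

lemma cycle_within_one_block:
  assumes cyc: "is_tanner_cycle H m n l r c" and "l < 4"
  shows "(\<forall>i<l. left (c i)) \<or> (\<forall>i<l. \<not> left (c i))"
proof (rule ccontr)
  assume "\<not> ?thesis"
  then obtain a b where ab: "a < l" "b < l" "left (c a)" "\<not> left (c b)"
    by blast
  then have "2 \<le> l"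
    by (cases "a = b") auto
  obtain a' b' where a'b': "a' < l" "a' \<noteq> a" "left (c a')" "b' < l" "b' \<noteq> b" "\<not> left (c b')"
    using cycle_column_kind_repeats[OF cyc \<open>2 \<le> l\<close>] ab by metis
  have "a \<noteq> b" "a \<noteq> b'" "a' \<noteq> b" "a' \<noteq> b'"
    using ab a'b' by auto
  with a'b' have "card {a, a', b, b'} = 4"
    by simp
  moreover have "{a, a', b, b'} \<subseteq> {..<l}"
    using ab a'b' by simp
  ultimately have "4 \<le> l"
    using card_mono[of "{..<l}" "{a, a', b, b'}"] by simp
  with \<open>l < 4\<close> show False by simp
qed

lemma left_block_cycle_projects:
  assumes cyc: "is_tanner_cycle H m n l r c" and left: "\<forall>i<l. left (c i)"
  shows "is_tanner_cycle A k k l (\<lambda>i. p (r i)) (\<lambda>i. P (c i))"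
proof -
  note less = is_tanner_cycleD(1,2)[OF cyc]
  have "q (r i) = q (r (Suc i))" if "Suc i < l" for i
    using is_tanner_cycleD(4)[OF cyc, of i] is_tanner_cycleD(3)[OF cyc, of "Suc i"]
      left less[of i] less[of "Suc i"] that by (simp add: entry)
  then have q_const: "q (r i) = q (r 0)" if "i < l" for i
    using that by (rule eq_along_chain)
  have Q_const: "Q (c i) = q (r 0)" if "i < l" for i
    using is_tanner_cycleD(3)[OF cyc that] left less[OF that] that q_const[OF that] by (simp add: entry)
  have "inj_on (\<lambda>i. p (r i)) {..<l}"
  proof (rule inj_onI)
    fix i j assume ij: "i \<in> {..<l}" "j \<in> {..<l}" and "p (r i) = p (r j)"
    moreover have "q (r i) = q (r j)"
      using q_const[of i] q_const[of j] ij by simp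
    ultimately have "r i = r j"
      using inj_onD[OF inj_row_coords, of "r i" "r j"] less by simp
    then show "i = j"
      using cyc ij by (auto simp: is_tanner_cycle_def dest: inj_onD)
  qed
  moreover have "inj_on (\<lambda>i. P (c i)) {..<l}"
  proof (rule inj_onI)
    fix i j assume ij: "i \<in> {..<l}" "j \<in> {..<l}" and "P (c i) = P (c j)"
    moreover have "Q (c i) = Q (c j)" and "left (c i) = left (c j)"
      using Q_const[of i] Q_const[of j] left ij by simp_all
    ultimately have "c i = c j"
      using inj_onD[OF inj_col_coords, of "c i" "c j"] less by simp
    then show "i = j"
      using cyc ij by (auto simp: is_tanner_cycle_def dest: inj_onD)
  qed
  moreover have "A (p (r i)) (P (c i)) \<and> A (p (r i)) (P (c (Suc i mod l)))" if "i < l" for i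
    using is_tanner_cycleD(3,4)[OF cyc that] less[OF that] less[of "Suc i mod l"] left that
    by (simp add: entry)
  ultimately show ?thesis
    using less row_coords_less col_coords_less by (simp add: is_tanner_cycle_def)
qed

theorem no_short_tanner_cycles:
  assumes "l < 4" and "\<not> tanner_cycle A k k l" and "\<not> tanner_cycle C k k l"
  shows "\<not> tanner_cycle H m n l"
proof
  assume "tanner_cycle H m n l"
  then obtain r c where cyc: "is_tanner_cycle H m n l r c"
    by (auto simp: tanner_cycle_iff)
  from cycle_within_one_block[OF cyc \<open>l < 4\<close>] show False
  proof
    assume "\<forall>i<l. left (c i)"
    then have "tanner_cycle A k k l"
      using left_block_cycle_projects[OF cyc] tanner_cycle_iff by blast
    with assms(2) show False ..
  next
    assume "\<forall>i<l. \<not> left (c i)"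
    then have "tanner_cycle C k k l"
      using hypergraph_product.left_block_cycle_projects[OF swap_blocks cyc] tanner_cycle_iff by blast
    with assms(3) show False ..
  qed
qed

end

lemma second_block_offset:
  fixes c N :: nat
  assumes "\<not> c < N" "c < 2 * N"
  shows "c - N = c mod N"
proof -
  have "c - N < N" using assms by simp
  then show ?thesis using assms by (simp add: le_mod_geq)
qed

lemma kron_block_coords_eq:
  fixes x y s :: nat
  assumes "x < 2 * (s * s)" "y < 2 * (s * s)" "(x < s * s) = (y < s * s)"
    and "x mod (s * s) div s = y mod (s * s) div s" "x mod s = y mod s"
  shows "x = y"
proof -
  have "x mod (s * s) mod s = y mod (s * s) mod s"
    using assms(5) by (simp add: mod_mod_cancel)
  then have "x mod (s * s) = y mod (s * s)"
    using assms(4) by (metis div_mult_mod_eq)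
  then show "x = y"
    using assms(1-3) second_block_offset[of x "s * s"] second_block_offset[of y "s * s"]
    by (cases "x < s * s") auto
qed

lemma hypergraph_product_HX:
  assumes "0 < s"
  shows "hypergraph_product (HX s B) (s * s) (2 * (s * s)) B (btrans B) s
    (\<lambda>r. r div s) (\<lambda>r. r mod s) (\<lambda>c. c < s * s) (\<lambda>c. c mod (s * s) div s) (\<lambda>c. c mod s)"
proof
  show "inj_on (\<lambda>r. (r div s, r mod s)) {..<s * s}"
    by (rule inj_onI) (metis div_mult_mod_eq prod.inject)
  show "inj_on (\<lambda>c. (c < s * s, c mod (s * s) div s, c mod s)) {..<2 * (s * s)}"
    by (rule inj_onI) (use kron_block_coords_eq in simp)
  show "r div s < s \<and> r mod s < s" if "r < s * s" for r
    using that assms by (simp add: less_mult_imp_div_less)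
  show "c mod (s * s) div s < s \<and> c mod s < s" for c
    using assms by (simp add: less_mult_imp_div_less)
  show "HX s B r c = (if c < s * s then B (r div s) (c mod (s * s) div s) \<and> r mod s = c mod s
      else r div s = c mod (s * s) div s \<and> btrans B (r mod s) (c mod s))"
    if "c < 2 * (s * s)" for r c
    using that second_block_offset[of c "s * s"]
    by (auto simp: HX_def bhcat_def bkron_def bid_def btrans_def mod_mod_cancel)
qed

lemma hypergraph_product_HZ:
  assumes "0 < s"
  shows "hypergraph_product (HZ s B) (s * s) (2 * (s * s)) B (btrans B) s
    (\<lambda>r. r mod s) (\<lambda>r. r div s) (\<lambda>c. c < s * s) (\<lambda>c. c mod s) (\<lambda>c. c mod (s * s) div s)"
proof
  show "inj_on (\<lambda>r. (r mod s, r div s)) {..<s * s}"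
    by (rule inj_onI) (metis div_mult_mod_eq prod.inject)
  show "inj_on (\<lambda>c. (c < s * s, c mod s, c mod (s * s) div s)) {..<2 * (s * s)}"
    by (rule inj_onI) (use kron_block_coords_eq in simp)
  show "r mod s < s \<and> r div s < s" if "r < s * s" for r
    using that assms by (simp add: less_mult_imp_div_less)
  show "c mod s < s \<and> c mod (s * s) div s < s" for c
    using assms by (simp add: less_mult_imp_div_less)
  show "HZ s B r c = (if c < s * s then B (r mod s) (c mod s) \<and> r div s = c mod (s * s) div s
      else r mod s = c mod s \<and> btrans B (r div s) (c mod (s * s) div s))"
    if "c < 2 * (s * s)" for r c
    using that second_block_offset[of c "s * s"]
    by (auto simp: HZ_def bhcat_def bkron_def bid_def btrans_def mod_mod_cancel)
qed

theorem mainTheorem2: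
  fixes s :: nat and B :: bmat
  assumes "s \<ge> 1"
    and "\<not> tanner_cycle B s s 2"
    and "\<not> tanner_cycle B s s 3"
  shows "\<not> tanner_cycle (HX s B) (s * s) (2 * (s * s)) 2
       \<and> \<not> tanner_cycle (HX s B) (s * s) (2 * (s * s)) 3
       \<and> \<not> tanner_cycle (HZ s B) (s * s) (2 * (s * s)) 2
       \<and> \<not> tanner_cycle (HZ s B) (s * s) (2 * (s * s)) 3"
proof -
  have "0 < s"
    using assms(1) by simp
  note HX_cycles = hypergraph_product.no_short_tanner_cycles[OF hypergraph_product_HX[OF \<open>0 < s\<close>]]
  note HZ_cycles = hypergraph_product.no_short_tanner_cycles[OF hypergraph_product_HZ[OF \<open>0 < s\<close>]]
  have "\<not> tanner_cycle (btrans B) s s 2" "\<not> tanner_cycle (btrans B) s s 3"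
    using assms(2,3) tanner_cycle_btrans by blast+
  with assms(2,3) show ?thesis
    using HX_cycles HZ_cycles by simp
qed

end
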